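(* For every power bounded $T\in\mathcal{B}(\mathbb{C}^2)$ of class $C_{11}$, the Cesàro asymptotic limits $A_{T,C}$ and $A_{T^*,C}$ are invertible and $A_{T,C}^{-1}+A_{T^*,C}^{-1}=2I_2$.
   Context: For a power bounded matrix $T$, $A_{T,C}=\lim_{n\to\infty}\frac1n\sum_{j=1}^nT^{*j}T^j$. $\mathcal{H}_0(T)=\{x:\|T^nx\|\to0\}$; $T$ is of class $C_{11}$ if $\mathcal{H}_0(T)=\{0\}$ and $\mathcal{H}_0(T^* )=\{0\}$. *)

theory Defs
  imports "HOL-Analysis.Analysis"
begin

text \<open>Complex n x n matrices are modelled as complex^'n^'n (HOL-Analysis),
  with the norm topology of that type (all norms on a finite-dimensional
  space are equivalent).\<close>

definition mpow :: "complex^'n^'n \<Rightarrow> nat \<Rightarrow> complex^'n^'n" where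
  "mpow A k = ((\<lambda>M. A ** M) ^^ k) (mat 1)"

definition cadj :: "complex^'n^'m \<Rightarrow> complex^'m^'n" where
  "cadj A = (\<chi> i j. cnj (A $ j $ i))"

definition power_bounded :: "complex^'n^'n \<Rightarrow> bool" where
  "power_bounded T \<longleftrightarrow> (\<exists>M. \<forall>k. norm (mpow T k) \<le> M)"

definition H0 :: "complex^'n^'n \<Rightarrow> (complex^'n) set" where
  "H0 T = {x. (\<lambda>k. norm (mpow T k *v x)) \<longlonglongrightarrow> 0}"

definition class_C11 :: "complex^'n^'n \<Rightarrow> bool" where
  "class_C11 T \<longleftrightarrow> H0 T = {0} \<and> H0 (cadj T) = {0}"

definition cesaro_mean :: "complex^'n^'n \<Rightarrow> nat \<Rightarrow> complex^'n^'n" where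
  "cesaro_mean T n = (1 / real n) *\<^sub>R (\<Sum>j=1..n. mpow (cadj T) j ** mpow T j)"

end

theory Submission
  imports Defs
begin

text \<open>
  Let \<open>l1, l2\<close> be the eigenvalues of \<open>T\<close>. Power boundedness forces \<open>|l| \<le> 1\<close> for every
  eigenvalue, and \<open>H0 T = {0}\<close> forces \<open>|l| \<ge> 1\<close>, so both are unimodular (only this half of
  the class \<open>C11\<close> hypothesis is needed).

  If \<open>l1 = l2 = l\<close>, Cayley--Hamilton makes \<open>N = T - l\<close> square-zero, and
  \<open>T^n = l^n + n l^(n-1) N\<close> stays bounded only if \<open>N = 0\<close>; then both Ces\<agrave>ro limits are \<open>I\<close>.

  If \<open>l1 \<noteq> l2\<close>, then \<open>T^n = l1^n P + l2^n Q\<close> with the spectral projections \<open>P, Q\<close>, and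
  \<open>T*^j T^j = P*P + Q*Q + (cnj l1 l2)^j P*Q + (cnj l2 l1)^j Q*P\<close>. The cross terms are powers
  of unimodular numbers \<open>\<noteq> 1\<close>, whose Ces\<agrave>ro means vanish, so \<open>A = P*P + Q*Q\<close> and likewise
  \<open>B = PP* + QQ*\<close>. For a rank one projection in dimension two a direct computation gives
  \<open>AB = BA = k I\<close> and \<open>A + B = 2k I\<close> with \<open>k = \<parallel>P\<parallel>\<^sup>2\<close>, hence
  \<open>A\<inverse> + B\<inverse> = (A + B) / k = 2 I\<close>.
\<close>

section \<open>Scalar matrices, adjoints and powers\<close>

lemma mat_mult_nth [simp]: "(mat c ** A) $ i $ j = c * A $ i $ j"
  for A :: "'a::semiring_1^'n^'m"
  by (simp add: matrix_matrix_mult_def mat_def if_distrib if_distribR cong: if_cong)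

lemma matrix_mult_mat_commute: "A ** mat c = mat c ** A"
  for A :: "'a::comm_semiring_1^'n^'n"
  by (simp add: vec_eq_iff matrix_matrix_mult_def mat_def if_distrib if_distribR mult.commute
      cong: if_cong)

lemma mat_mult_left_commute: "A ** (mat c ** B) = mat c ** (A ** B)"
  for A B :: "'a::comm_semiring_1^'n^'n"
  by (metis matrix_mul_assoc matrix_mult_mat_commute)

lemma mat_mult_mat: "mat a ** mat b = (mat (a * b) :: 'a::semiring_1^'n^'n)"
  by (simp add: vec_eq_iff) (simp add: mat_def)

lemma mat_mult_mult_mat_mult: "(mat a ** A) ** (mat b ** B) = mat (a * b) ** (A ** B)"
  for A B :: "'a::comm_semiring_1^'n^'n"
  by (metis matrix_mul_assoc matrix_mult_mat_commute mat_mult_mat)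

lemma mat_add: "mat a + mat b = (mat (a + b) :: 'a::semiring_1^'n^'n)"
  by (simp add: vec_eq_iff mat_def)

lemma matrix_add_rdistrib: "(A + B) ** C = A ** C + B ** C"
  by (vector matrix_matrix_mult_def sum.distrib[symmetric] field_simps)

lemma matrix_diff_rdistrib: "(A - B) ** C = A ** C - B ** C"
  for A B :: "'a::ring_1^'n^'m"
  by (vector matrix_matrix_mult_def sum_subtractf left_diff_distrib)

lemma matrix_mult_eq_mat_mult_iff: "T ** M = mat l ** M \<longleftrightarrow> (T - mat l) ** M = 0"
  for T M :: "'a::ring_1^'n^'n"
  by (simp add: matrix_diff_rdistrib)

lemma matrix_vector_mult_smult: "A *v (c *s x) = c *s (A *v x)"
  for A :: "'a::comm_semiring_1^'n^'m"
  by (simp add: vec_eq_iff matrix_vector_mult_def sum_distrib_left mult.left_commute)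

lemma cadj_cadj [simp]: "cadj (cadj A) = A"
  by (simp add: cadj_def vec_eq_iff)

lemma cadj_add: "cadj (A + B) = cadj A + cadj B"
  by (simp add: cadj_def vec_eq_iff)

lemma cadj_mult: "cadj (A ** B) = cadj B ** cadj A"
  by (simp add: cadj_def vec_eq_iff matrix_matrix_mult_def mult.commute)

lemma cadj_mat: "cadj (mat c) = mat (cnj c)"
  by (simp add: cadj_def vec_eq_iff mat_def)

lemma mpow_0 [simp]: "mpow A 0 = mat 1"
  by (simp add: mpow_def)

lemma mpow_Suc: "mpow A (Suc k) = A ** mpow A k"
  by (simp add: mpow_def)

lemma mpow_cadj: "mpow (cadj A) n = cadj (mpow A n)"
proof (induction n)
  case (Suc n)
  have "A ** mpow A n = mpow A n ** A"
    by (induction n) (simp_all add: mpow_Suc matrix_mul_assoc)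
  then show ?case
    by (simp add: mpow_Suc Suc cadj_mult)
qed (simp add: cadj_mat)

lemma mpow_spectral:
  assumes "T ** P = mat a ** P" and "T ** Q = mat b ** Q" and "P + Q = mat 1"
  shows "mpow T n = mat (a ^ n) ** P + mat (b ^ n) ** Q"
proof (induction n)
  case 0
  then show ?case
    using assms(3) by simp
next
  case (Suc n)
  have "mpow T (Suc n) = mat (a ^ n) ** (T ** P) + mat (b ^ n) ** (T ** Q)"
    by (simp add: mpow_Suc Suc matrix_add_ldistrib mat_mult_left_commute)
  then show ?case
    by (simp add: assms(1,2) matrix_mul_assoc mat_mult_mat mult.commute)
qed

lemma mpow_scalar_plus_nilpotent:
  assumes "N ** N = 0"
  shows "mpow (mat l + N) (Suc k) = mat (l ^ Suc k) + mat (of_nat (Suc k) * l ^ k) ** N"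
proof (induction k)
  case 0
  then show ?case
    by (simp add: mpow_Suc)
next
  case (Suc k)
  have "mpow (mat l + N) (Suc (Suc k))
      = mat (l * l ^ Suc k) + mat (l * (of_nat (Suc k) * l ^ k)) ** N
        + mat (l ^ Suc k) ** N + mat (of_nat (Suc k) * l ^ k) ** (N ** N)"
    by (simp add: mpow_Suc[of _ "Suc k"] Suc matrix_add_ldistrib matrix_add_rdistrib
        mat_mult_mat matrix_mul_assoc matrix_mult_mat_commute[of N] add.assoc)
  also have "\<dots> = mat (l ^ Suc (Suc k)) + mat (of_nat (Suc (Suc k)) * l ^ Suc k) ** N"
    by (simp add: assms add.assoc flip: matrix_add_rdistrib) (simp add: mat_add algebra_simps)
  finally show ?case .
qed

lemma invertible_matrix_inv_eqI:
  fixes A X :: "'a::semiring_1^'n^'n"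
  assumes "A ** X = mat 1" and "X ** A = mat 1"
  shows "invertible A \<and> matrix_inv A = X"
proof -
  have "A ** matrix_inv A = mat 1 \<and> matrix_inv A ** A = mat 1"
    unfolding matrix_inv_def by (rule someI[of _ X]) (use assms in blast)
  then have "matrix_inv A = matrix_inv A ** (A ** X)"
    by (simp add: assms(1))
  also have "\<dots> = X"
    by (simp add: matrix_mul_assoc \<open>_ \<and> matrix_inv A ** A = mat 1\<close>)
  finally show ?thesis
    using assms unfolding invertible_def by blast
qed

lemma matrix_inv_add_matrix_inv_eq_2:
  fixes A B :: "complex^'n^'n"
  assumes "A ** B = mat k" and "B ** A = mat k" and "A + B = mat (2 * k)" and "k \<noteq> 0"
  shows "invertible A \<and> invertible B \<and> matrix_inv A + matrix_inv B = 2 *\<^sub>R mat 1"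
proof -
  have "A ** (mat (1 / k) ** B) = mat 1" "(mat (1 / k) ** B) ** A = mat 1"
    "B ** (mat (1 / k) ** A) = mat 1" "(mat (1 / k) ** A) ** B = mat 1"
    using assms(1,2,4) by (simp_all add: mat_mult_left_commute mat_mult_mat flip: matrix_mul_assoc)
  then have "invertible A \<and> matrix_inv A = mat (1 / k) ** B"
    "invertible B \<and> matrix_inv B = mat (1 / k) ** A"
    by (simp_all add: invertible_matrix_inv_eqI)
  moreover have "mat (1 / k) ** B + mat (1 / k) ** A = (2 *\<^sub>R mat 1 :: complex^'n^'n)"
    using assms(3,4) by (simp add: add.commute mat_mult_mat flip: matrix_add_ldistrib)
      (simp add: vec_eq_iff mat_def scaleR_conv_of_real)
  ultimately show ?thesis
    by simp
qed

lemma norm_nth_nth_le: "norm (A $ i $ j) \<le> norm A"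
  by (meson Finite_Cartesian_Product.norm_nth_le order_trans)

lemma norm_vector_smult: "norm (c *s x) = norm c * norm x"
  for x :: "'a::real_normed_field^'n"
  by (simp add: norm_vec_def norm_mult L2_set_right_distrib)

lemma norm_matrix_vector_mult_le:
  fixes A :: "'a::real_normed_algebra_1^'n^'m"
  shows "norm (A *v x) \<le> real (CARD('m) * CARD('n)) * norm A * norm x"
proof -
  have "norm (A *v x) \<le> (\<Sum>i\<in>UNIV. norm ((A *v x) $ i))"
    unfolding norm_vec_def by (rule L2_set_le_sum) simp
  also have "\<dots> \<le> (\<Sum>i\<in>(UNIV :: 'm set). \<Sum>k\<in>(UNIV :: 'n set). norm A * norm x)"
  proof (rule sum_mono)
    fix i
    have "norm ((A *v x) $ i) \<le> (\<Sum>k\<in>UNIV. norm (A $ i $ k * x $ k))"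
      unfolding matrix_vector_mult_def vec_lambda_beta by (rule norm_sum)
    also have "\<dots> \<le> (\<Sum>k\<in>(UNIV :: 'n set). norm A * norm x)"
      by (intro sum_mono order_trans[OF norm_mult_ineq] mult_mono norm_nth_nth_le
          Finite_Cartesian_Product.norm_nth_le) auto
    finally show "norm ((A *v x) $ i) \<le> (\<Sum>k\<in>(UNIV :: 'n set). norm A * norm x)" .
  qed
  finally show ?thesis
    by (simp add: mult.assoc)
qed

lemma norm_power2_vec: "(norm x)\<^sup>2 = (\<Sum>i\<in>UNIV. (norm (x $ i))\<^sup>2)"
  by (simp add: norm_vec_def L2_set_def sum_nonneg)

lemma of_real_norm_power2_matrix:
  "complex_of_real ((norm A)\<^sup>2) = (\<Sum>i\<in>UNIV. \<Sum>j\<in>UNIV. A $ i $ j * cnj (A $ i $ j))"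
  for A :: "complex^'n^'m"
  by (simp add: norm_power2_vec flip: complex_norm_square)

section \<open>Eigenvalues of power bounded matrices\<close>

lemma mpow_eigenvector: "T *v v = l *s v \<Longrightarrow> mpow T n *v v = l ^ n *s v"
  by (induction n) (simp_all add: mpow_Suc matrix_vector_mult_smult
      flip: matrix_vector_mul_assoc)

lemma power_bounded_eigenvalue_le_1:
  assumes "power_bounded T" and "T *v v = l *s v" and "v \<noteq> 0"
  shows "cmod l \<le> 1"
proof (rule ccontr)
  assume "\<not> cmod l \<le> 1"
  then have "1 < cmod l" by simp
  obtain M where M: "\<And>k. norm (mpow T k) \<le> M"
    using assms(1) unfolding power_bounded_def by blast
  define C where "C = real (CARD('a) * CARD('a)) * M"
  have "cmod l ^ k \<le> C" for k
  proof -
    have "cmod l ^ k * norm v = norm (mpow T k *v v)"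
      by (simp add: mpow_eigenvector[OF assms(2)] norm_vector_smult norm_power)
    also have "\<dots> \<le> real (CARD('a) * CARD('a)) * norm (mpow T k) * norm v"
      by (rule norm_matrix_vector_mult_le)
    also have "\<dots> \<le> C * norm v"
      unfolding C_def by (intro mult_right_mono mult_left_mono M) auto
    finally show ?thesis
      using assms(3) by simp
  qed
  moreover obtain k where "C < cmod l ^ k"
    using real_arch_pow[OF \<open>1 < cmod l\<close>] by blast
  ultimately show False
    by (meson not_le)
qed

lemma H0_trivial_eigenvalue_ge_1:
  assumes "H0 T = {0}" and "T *v v = l *s v" and "v \<noteq> 0"
  shows "1 \<le> cmod l"
proof (rule ccontr)
  assume "\<not> 1 \<le> cmod l"
  then have "(\<lambda>k. cmod l ^ k * norm v) \<longlonglongrightarrow> 0"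
    by (intro tendsto_mult_left_zero LIMSEQ_power_zero) auto
  then have "v \<in> H0 T"
    by (simp add: H0_def mpow_eigenvector[OF assms(2)] norm_vector_smult norm_power)
  with assms show False
    by simp
qed

lemma eigenvalue_norm_eq_1:
  assumes "power_bounded T" and "H0 T = {0}" and "T ** M = mat l ** M" and "M \<noteq> 0"
  shows "cmod l = 1"
proof -
  obtain j where "column j M \<noteq> 0"
    using assms(4) by (metis column_def vec_eq_iff zero_index vec_lambda_beta)
  moreover have "T *v column j M = l *s column j M"
  proof -
    have "(T ** M) $ i $ j = l * M $ i $ j" for i
      using assms(3) by simp
    then show ?thesis
      by (simp add: vec_eq_iff column_def matrix_vector_mult_def matrix_matrix_mult_def)
  qed
  ultimately show ?thesis
    using power_bounded_eigenvalue_le_1 H0_trivial_eigenvalue_ge_1 assms(1,2)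
    by (metis antisym)
qed

lemma power_bounded_square_zero_shift_eq_mat:
  assumes "power_bounded T" and "cmod l = 1" and "(T - mat l) ** (T - mat l) = 0"
  shows "T = mat l"
proof -
  define N where "N = T - mat l"
  have T: "T = mat l + N"
    by (simp add: N_def)
  obtain M where M: "\<And>k. norm (mpow T k) \<le> M"
    using assms(1) unfolding power_bounded_def by blast
  have "N $ i $ j = 0" for i j
  proof (rule ccontr)
    assume "N $ i $ j \<noteq> 0"
    obtain k :: nat where k: "M + 1 < real k * cmod (N $ i $ j)"
      using reals_Archimedean3[of "cmod (N $ i $ j)"] \<open>N $ i $ j \<noteq> 0\<close> by auto
    have entry: "mpow T (Suc k) $ i $ j
        = of_nat (Suc k) * l ^ k * N $ i $ j + mat (l ^ Suc k) $ i $ j"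
      unfolding T mpow_scalar_plus_nilpotent[OF assms(3)[folded N_def]] by simp
    have "cmod (mat (l ^ Suc k) $ i $ j) \<le> 1"
      using assms(2) by (simp add: mat_def norm_mult norm_power)
    moreover have "cmod (of_nat (Suc k) * l ^ k * N $ i $ j) = real (Suc k) * cmod (N $ i $ j)"
      using assms(2) by (simp only: norm_mult norm_power norm_of_nat) simp
    ultimately have "real (Suc k) * cmod (N $ i $ j) - 1 \<le> cmod (mpow T (Suc k) $ i $ j)"
      unfolding entry
      using norm_diff_ineq[of "of_nat (Suc k) * l ^ k * N $ i $ j" "mat (l ^ Suc k) $ i $ j"]
      by linarith
    also have "\<dots> \<le> M"
      using M norm_nth_nth_le order_trans by blast
    finally show False
      using k norm_ge_zero[of "N $ i $ j"] by (simp add: algebra_simps)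
  qed
  then show ?thesis
    by (simp add: T vec_eq_iff)
qed

lemma square_zero_shift_eq_mat:
  assumes "power_bounded T" and "H0 T = {0}" and "(T - mat l) ** (T - mat l) = 0"
  shows "T = mat l" and "cmod l = 1"
proof -
  show "cmod l = 1"
  proof (cases "T = mat l")
    case True
    have "(mat 1 :: complex^'a^'a) \<noteq> 0"
      by (simp add: vec_eq_iff mat_def)
    then show ?thesis
      using eigenvalue_norm_eq_1[OF assms(1,2), of "mat 1"] True by simp
  next
    case False
    then show ?thesis
      using eigenvalue_norm_eq_1[OF assms(1,2), where M = "T - mat l"] assms(3)
      by (simp add: matrix_mult_eq_mat_mult_iff)
  qed
  then show "T = mat l"
    using power_bounded_square_zero_shift_eq_mat assms(1,3) by blast
qed

section \<open>Ces\<agrave>ro means\<close>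

lemma cesaro_unimodular_power_tendsto_0:
  fixes w :: complex
  assumes "cmod w = 1" and "w \<noteq> 1"
  shows "(\<lambda>n. (\<Sum>j=1..n. w ^ j) / of_nat n) \<longlonglongrightarrow> 0"
proof (rule Lim_null_comparison)
  have "cmod (\<Sum>j=1..n. w ^ j) \<le> 2 / cmod (1 - w)" for n
  proof (cases "n = 0")
    case False
    have "cmod (w - w ^ Suc n) \<le> 2"
      using norm_triangle_ineq4[of w "w ^ Suc n"] assms(1) by (simp add: norm_power norm_mult)
    then show ?thesis
      using False assms by (simp add: sum_gp norm_divide divide_right_mono)
  qed simp
  then show "\<forall>\<^sub>F n in sequentially. norm ((\<Sum>j=1..n. w ^ j) / of_nat n) \<le> (2 / cmod (1 - w)) / real n"
    unfolding norm_divide norm_of_nat by (intro always_eventually allI divide_right_mono) auto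
qed (rule lim_const_over_n)

lemma cadj_spectral_mult_spectral:
  fixes P Q :: "complex^'n^'n"
  assumes "cnj a * a = 1" and "cnj b * b = 1"
  shows "cadj (mat (a ^ j) ** P + mat (b ^ j) ** Q) ** (mat (a ^ j) ** P + mat (b ^ j) ** Q)
    = cadj P ** P + cadj Q ** Q
      + mat ((cnj a * b) ^ j) ** (cadj P ** Q) + mat ((cnj b * a) ^ j) ** (cadj Q ** P)"
proof -
  have "cadj (mat (a ^ j) ** P + mat (b ^ j) ** Q) ** (mat (a ^ j) ** P + mat (b ^ j) ** Q)
      = (mat (cnj a ^ j) ** cadj P + mat (cnj b ^ j) ** cadj Q)
        ** (mat (a ^ j) ** P + mat (b ^ j) ** Q)"
    by (simp add: cadj_add cadj_mult cadj_mat
        matrix_mult_mat_commute[of "cadj P"] matrix_mult_mat_commute[of "cadj Q"])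
  also have "\<dots> = mat ((cnj a * a) ^ j) ** (cadj P ** P) + mat ((cnj a * b) ^ j) ** (cadj P ** Q)
      + (mat ((cnj b * a) ^ j) ** (cadj Q ** P) + mat ((cnj b * b) ^ j) ** (cadj Q ** Q))"
    by (simp add: matrix_add_ldistrib matrix_add_rdistrib mat_mult_mult_mat_mult power_mult_distrib)
  finally show ?thesis
    by (simp add: assms add_ac)
qed

lemma cesaro_mean_spectral:
  assumes mpow_T: "\<And>n. mpow T n = mat (a ^ n) ** P + mat (b ^ n) ** Q"
    and "cmod a = 1" and "cmod b = 1" and "a \<noteq> b"
  shows "cesaro_mean T \<longlonglongrightarrow> cadj P ** P + cadj Q ** Q"
proof -
  define C where "C = cadj P ** P + cadj Q ** Q"
  define w z where "w = cnj a * b" and "z = cnj b * a"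
  define avg :: "complex \<Rightarrow> nat \<Rightarrow> complex"
    where "avg u n = (\<Sum>j=1..n. u ^ j) / of_nat n" for u n
  have unimodular: "cnj a * a = 1" "cnj b * b = 1"
    using assms(2,3) complex_norm_square[of a] complex_norm_square[of b] by (simp_all add: mult.commute)
  have "b = a * w" "a = b * z"
    by (simp_all add: w_def z_def mult.assoc[symmetric] mult.commute[of _ "cnj _"] unimodular)
  then have "w \<noteq> 1" "z \<noteq> 1"
    using assms(4) by auto
  moreover have "cmod w = 1" "cmod z = 1"
    using assms(2,3) by (simp_all add: w_def z_def norm_mult)
  ultimately have avg_lim: "avg w \<longlonglongrightarrow> 0" "avg z \<longlonglongrightarrow> 0"
    unfolding avg_def using cesaro_unimodular_power_tendsto_0 by blast+
  have mean: "cesaro_mean T n $ i $ k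
      = C $ i $ k + (cadj P ** Q) $ i $ k * avg w n + (cadj Q ** P) $ i $ k * avg z n"
    if "n \<ge> 1" for n i k
    using that
    by (simp add: cesaro_mean_def mpow_cadj mpow_T
        cadj_spectral_mult_spectral[OF unimodular, folded w_def z_def] C_def
        sum.distrib avg_def del: sum_constant)
      (simp add: scaleR_conv_of_real sum_distrib_right field_simps)
  show ?thesis
  proof (intro vec_tendstoI)
    fix i k
    have "(\<lambda>n. C $ i $ k + (cadj P ** Q) $ i $ k * avg w n + (cadj Q ** P) $ i $ k * avg z n)
        \<longlonglongrightarrow> C $ i $ k + (cadj P ** Q) $ i $ k * 0 + (cadj Q ** P) $ i $ k * 0"
      by (intro tendsto_intros avg_lim)
    moreover have "\<forall>\<^sub>F n in sequentially.
        C $ i $ k + (cadj P ** Q) $ i $ k * avg w n + (cadj Q ** P) $ i $ k * avg z n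
        = cesaro_mean T n $ i $ k"
      using mean by (intro eventually_sequentiallyI[of 1]) simp
    ultimately show "(\<lambda>n. cesaro_mean T n $ i $ k) \<longlonglongrightarrow> (cadj P ** P + cadj Q ** Q) $ i $ k"
      unfolding C_def by (simp add: Lim_transform_eventually)
  qed
qed

lemma cesaro_means_spectral:
  assumes "T ** P = mat a ** P" and "T ** Q = mat b ** Q" and "P + Q = mat 1"
    and "cmod a = 1" and "cmod b = 1" and "a \<noteq> b"
  shows "cesaro_mean T \<longlonglongrightarrow> cadj P ** P + cadj Q ** Q"
    and "cesaro_mean (cadj T) \<longlonglongrightarrow> P ** cadj P + Q ** cadj Q"
proof -
  note mpow_T = mpow_spectral[OF assms(1-3)]
  show "cesaro_mean T \<longlonglongrightarrow> cadj P ** P + cadj Q ** Q"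
    using cesaro_mean_spectral[OF mpow_T assms(4-6)] .
  have "mpow (cadj T) n = mat (cnj a ^ n) ** cadj P + mat (cnj b ^ n) ** cadj Q" for n
    by (simp add: mpow_cadj mpow_T cadj_add cadj_mult cadj_mat
        matrix_mult_mat_commute[of "cadj P"] matrix_mult_mat_commute[of "cadj Q"])
  from cesaro_mean_spectral[OF this] assms(4-6)
  show "cesaro_mean (cadj T) \<longlonglongrightarrow> P ** cadj P + Q ** cadj Q"
    by simp
qed

section \<open>Complex $2 \times 2$ matrices\<close>

lemma complex_exists_roots_sum_product: "\<exists>l1 l2 :: complex. l1 + l2 = s \<and> l1 * l2 = p"
proof -
  define r where "r = csqrt (s\<^sup>2 - 4 * p)"
  have "(s + r) / 2 * ((s - r) / 2) = (s\<^sup>2 - r\<^sup>2) / 4"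
    by (simp add: field_simps power2_eq_square)
  also have "\<dots> = p"
    by (simp add: r_def)
  finally have "(s + r) / 2 + (s - r) / 2 = s \<and> (s + r) / 2 * ((s - r) / 2) = p"
    by (simp add: field_simps)
  then show ?thesis
    by blast
qed

lemma trace_2: "trace (A :: 'a::semiring_1^2^2) = A $ 1 $ 1 + A $ 2 $ 2"
  by (simp add: trace_def sum_2)

lemma trace_mat_mult: "trace (mat c ** A) = c * trace A"
  for A :: "'a::semiring_1^'n^'n"
  by (simp add: trace_def sum_distrib_left)

lemma cayley_hamilton_2:
  fixes T :: "'a::comm_ring_1^2^2"
  assumes "l1 + l2 = trace T" and "l1 * l2 = det T"
  shows "(T - mat l1) ** (T - mat l2) = 0"
proof -
  have T22: "T $ 2 $ 2 = l1 + l2 - T $ 1 $ 1"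
    using assms(1) by (simp add: trace_2)
  have T12: "T $ 1 $ 2 * T $ 2 $ 1 = T $ 1 $ 1 * (l1 + l2 - T $ 1 $ 1) - l1 * l2"
    using assms(2) by (simp add: det_2 T22)
  show ?thesis
    unfolding vec_eq_iff forall_2
    by (simp add: matrix_matrix_mult_def sum_2 mat_def T22 T12 algebra_simps)
qed

lemma rank_one_idempotent_gram_sums_2:
  fixes P :: "complex^2^2"
  assumes "trace P = 1" and "det P = 0"
  defines "A \<equiv> cadj P ** P + cadj (mat 1 - P) ** (mat 1 - P)"
    and "B \<equiv> P ** cadj P + (mat 1 - P) ** cadj (mat 1 - P)"
    and "k \<equiv> complex_of_real ((norm P)\<^sup>2)"
  shows "A ** B = mat k" and "B ** A = mat k" and "A + B = mat (2 * k)"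
proof -
  have tr: "P $ 1 $ 1 + P $ 2 $ 2 = 1" and det: "P $ 1 $ 1 * P $ 2 $ 2 = P $ 1 $ 2 * P $ 2 $ 1"
    using assms(1,2) by (simp_all add: trace_2 det_2)
  have tr': "cnj (P $ 1 $ 1) + cnj (P $ 2 $ 2) = 1"
    using tr by (metis complex_cnj_add complex_cnj_one)
  have det': "cnj (P $ 1 $ 1) * cnj (P $ 2 $ 2) = cnj (P $ 1 $ 2) * cnj (P $ 2 $ 1)"
    using det by (metis complex_cnj_mult)
  note expand = vec_eq_iff forall_2 A_def B_def k_def of_real_norm_power2_matrix
  show "A ** B = mat k"
    unfolding expand
    by (simp add: cadj_def matrix_matrix_mult_def sum_2 mat_def; use tr det tr' det' in algebra)
  show "B ** A = mat k"
    unfolding expand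
    by (simp add: cadj_def matrix_matrix_mult_def sum_2 mat_def; use tr det tr' det' in algebra)
  show "A + B = mat (2 * k)"
    unfolding expand
    by (simp add: cadj_def matrix_matrix_mult_def sum_2 mat_def; use tr det tr' det' in algebra)
qed

lemma distinct_eigenvalues_cesaro_limits:
  fixes T :: "complex^2^2"
  assumes "power_bounded T" and "H0 T = {0}"
    and "l1 + l2 = trace T" and "l1 * l2 = det T" and "l1 \<noteq> l2"
  obtains A B k where "cesaro_mean T \<longlonglongrightarrow> A" and "cesaro_mean (cadj T) \<longlonglongrightarrow> B"
    and "A ** B = mat k" and "B ** A = mat k" and "A + B = mat (2 * k)" and "k \<noteq> 0"
proof -
  define P where "P = mat (1 / (l1 - l2)) ** (T - mat l2)"
  define Q where "Q = mat (1 / (l2 - l1)) ** (T - mat l1)"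
  have "l1 - l2 \<noteq> 0" "l2 - l1 \<noteq> 0"
    using assms(5) by simp_all
  then have PQ: "P + Q = mat 1"
    by (simp add: P_def Q_def vec_eq_iff) (simp add: mat_def divide_simps, simp add: algebra_simps)
  have TP: "T ** P = mat l1 ** P"
    using cayley_hamilton_2[OF assms(3,4)]
    by (simp add: matrix_mult_eq_mat_mult_iff P_def mat_mult_left_commute[of "T - mat l1"])
  have TQ: "T ** Q = mat l2 ** Q"
    using cayley_hamilton_2[of l2 l1 T] assms(3,4)
    by (simp add: matrix_mult_eq_mat_mult_iff Q_def mat_mult_left_commute[of "T - mat l2"]
        add.commute mult.commute)
  have trP: "trace P = 1"
    using \<open>l1 - l2 \<noteq> 0\<close>
    by (simp add: P_def trace_mat_mult trace_sub flip: assms(3)) (simp add: trace_2 mat_def)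
  have "det (T - mat l2) = 0"
    using assms(3,4) unfolding det_2 trace_2 by (simp add: mat_def, algebra)
  then have detP: "det P = 0"
    by (simp add: P_def det_mul)
  have "P \<noteq> 0"
    using trP by (auto simp: trace_2)
  moreover have "Q \<noteq> 0"
    using trP PQ by (auto simp: trace_2 mat_def)
  ultimately have "cmod l1 = 1" "cmod l2 = 1"
    using eigenvalue_norm_eq_1[OF assms(1,2)] TP TQ by blast+
  moreover have Q: "Q = mat 1 - P"
    using PQ by (simp add: algebra_simps)
  ultimately show thesis
    using cesaro_means_spectral[OF TP TQ PQ _ _ assms(5)] rank_one_idempotent_gram_sums_2[OF trP detP]
      \<open>P \<noteq> 0\<close>
    by (intro that[of _ _ "complex_of_real ((norm P)\<^sup>2)"]) (simp_all add: Q)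
qed

theorem mainTheorem9:
  fixes T :: "complex^2^2"
  assumes "power_bounded T" and "class_C11 T"
  shows "\<exists>A B. cesaro_mean T \<longlonglongrightarrow> A \<and> cesaro_mean (cadj T) \<longlonglongrightarrow> B \<and>
           invertible A \<and> invertible B \<and>
           matrix_inv A + matrix_inv B = 2 *\<^sub>R (mat 1 :: complex^2^2)"
proof -
  have H0: "H0 T = {0}"
    using assms(2) by (simp add: class_C11_def)
  obtain l1 l2 where roots: "l1 + l2 = trace T" "l1 * l2 = det T"
    using complex_exists_roots_sum_product by blast
  obtain A B k where "cesaro_mean T \<longlonglongrightarrow> A" "cesaro_mean (cadj T) \<longlonglongrightarrow> B"
    and "A ** B = mat k" "B ** A = mat k" "A + B = mat (2 * k)" "k \<noteq> 0"
  proof (cases "l1 = l2")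
    case True
    then have "T = mat l1" "cmod l1 = 1"
      using square_zero_shift_eq_mat[OF assms(1) H0] cayley_hamilton_2[OF roots] by auto
    \<comment> \<open>\<open>mat l1 = l1 I + (- l1) 0\<close> is a spectral decomposition; \<open>- l1\<close> is a dummy eigenvalue\<close>
    then have "cesaro_mean T \<longlonglongrightarrow> mat 1" "cesaro_mean (cadj T) \<longlonglongrightarrow> mat 1"
      using cesaro_means_spectral[of T "mat 1" l1 0 "- l1"] by (force simp: cadj_mat)+
    then show thesis
      by (rule that[where k = 1]) (simp_all add: mat_add)
  next
    case False
    then show thesis
      using distinct_eigenvalues_cesaro_limits[OF assms(1) H0 roots] that by blast
  qed
  then show ?thesis
    using matrix_inv_add_matrix_inv_eq_2 by blast
qed

end
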